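(* Let $k\ge1$, let $a_1,\ldots,a_k$ be positive integers, let $\theta=(\theta_1,\ldots,\theta_k)$ be a $k$-tuple of nonnegative integers, and let $r$ be an integer. Then the residue mod $2$ of $$\sum_{B}\prod_{i=1}^k\binom{a_i+b_i-2}{b_i},$$ where $B=(b_1,\ldots,b_k)$ ranges over all $k$-tuples of nonnegative integers with $b_1+\cdots+b_k=k-r$ and $B+\theta\in\mathcal{S}_k$, depends only on the residues $a_i\bmod 2^{\lg(2i)}$, $i=1,\ldots,k$.
   Context: $\mathcal{S}_k$ is the set of $k$-tuples of nonnegative integers such that, for every $j$, the sum of the first $j$ components is $\le j$. $\lg(x)=\lfloor\log_2x\rfloor$. Binomial coefficients are $\binom{x}{b}=x(x-1)\cdots(x-b+1)/b!$ for integer $x$ and $b\ge0$ (so $\binom{-1}{0}=1$). (This sum is the formula, due to earlier work of the author, for $\phi(R^{m-r}V_{j_1}\cdots V_{j_r})$ in the top cohomology of a planar polygon space with a single gene $\{m+3,g_1,\ldots,g_k\}$, $a_i=g_i-g_{i+1}$, $\theta=\theta(\{j_1,\ldots,j_r\})$.) *)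

theory Defs
  imports Complex_Main "HOL-Library.Discrete_Functions"
begin

definition lg :: "nat \<Rightarrow> nat" where
  "lg x = floor_log x"

definition S :: "nat \<Rightarrow> (nat \<Rightarrow> nat) set" where
  "S k = {c. (\<forall>i. i \<notin> {1..k} \<longrightarrow> c i = 0) \<and> (\<forall>j\<in>{1..k}. (\<Sum>i=1..j. c i) \<le> j)}"

definition ibinom :: "int \<Rightarrow> nat \<Rightarrow> int" where
  "ibinom x b = (\<Prod>j<b. x - int j) div fact b"

definition csum :: "nat \<Rightarrow> (nat \<Rightarrow> nat) \<Rightarrow> int \<Rightarrow> (nat \<Rightarrow> nat) \<Rightarrow> int" where
  "csum k \<theta> r a =
     (\<Sum>B\<in>{B. (\<forall>i. i \<notin> {1..k} \<longrightarrow> B i = 0) \<and> int (\<Sum>i=1..k. B i) = int k - r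
             \<and> (\<lambda>i. B i + \<theta> i) \<in> S k}.
        \<Prod>i=1..k. ibinom (int (a i) + int (B i) - 2) (B i))"

end

theory Submission
  imports Defs "HOL-Computational_Algebra.Primes"
begin

text \<open>For \<open>a > 0\<close> the factor \<open>binom(a + b - 2, b)\<close> is an ordinary binomial coefficient of
  natural numbers, and for a prime \<open>p\<close> the residue of \<open>binom(n, b)\<close> mod \<open>p\<close> depends only on
  \<open>n mod p^m\<close> once \<open>b < p^m\<close>, because \<open>binom(n + p^m, b)\<close> differs from \<open>binom(n, b)\<close> by a
  Vandermonde sum all of whose terms contain some \<open>binom(p^m, j)\<close> with \<open>0 < j < p^m\<close>,
  a multiple of \<open>p\<close>.  The partial-sum condition defining \<open>S_k\<close> forces \<open>b_i \<le> i < 2^lg(2i)\<close>,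
  so each factor of each summand is determined mod 2 by \<open>a_i mod 2^lg(2i)\<close>.\<close>

lemma prime_dvd_prime_power_choose:
  fixes p :: nat
  assumes "prime p" "0 < j" "j < p ^ m"
  shows "p dvd (p ^ m choose j)"
proof (rule ccontr)
  assume "\<not> p dvd (p ^ m choose j)"
  then have "coprime (p ^ m) (p ^ m choose j)"
    using assms(1) by (simp add: coprime_commute prime_imp_coprime)
  moreover have "p ^ m dvd j * (p ^ m choose j)"
    using times_binomial_minus1_eq[OF assms(2), of "p ^ m"] by simp
  ultimately have "p ^ m dvd j"
    using coprime_dvd_mult_left_iff by blast
  with assms(2,3) show False
    by (simp add: nat_dvd_not_less)
qed

lemma binomial_add_prime_power_mod:
  fixes p :: nat
  assumes "prime p" "b < p ^ m"
  shows "((n + p ^ m) choose b) mod p = (n choose b) mod p"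
proof -
  have "((n + p ^ m) choose b) = (\<Sum>j\<le>b. (p ^ m choose j) * (n choose (b - j)))"
    by (subst add.commute) (rule vandermonde[symmetric])
  also have "\<dots> = (n choose b) + (\<Sum>j\<in>{1..b}. (p ^ m choose j) * (n choose (b - j)))"
    by (simp add: atMost_atLeast0 sum.atLeast_Suc_atMost)
  finally have "((n + p ^ m) choose b)
      = (n choose b) + (\<Sum>j\<in>{1..b}. (p ^ m choose j) * (n choose (b - j)))" .
  moreover have "p dvd (\<Sum>j\<in>{1..b}. (p ^ m choose j) * (n choose (b - j)))"
    using assms by (intro dvd_sum) (auto intro!: dvd_mult2 prime_dvd_prime_power_choose)
  ultimately show ?thesis
    by auto
qed

lemma binomial_add_mult_prime_power_mod:
  fixes p :: nat
  assumes "prime p" "b < p ^ m"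
  shows "((n + t * p ^ m) choose b) mod p = (n choose b) mod p"
proof (induction t)
  case (Suc t)
  have "n + Suc t * p ^ m = (n + t * p ^ m) + p ^ m"
    by simp
  then show ?case
    using binomial_add_prime_power_mod[OF assms, of "n + t * p ^ m"] Suc by (simp only:)
qed simp

lemma binomial_mod_prime_cong:
  fixes p :: nat
  assumes "prime p" "b < p ^ m" "n mod p ^ m = n' mod p ^ m"
  shows "(n choose b) mod p = (n' choose b) mod p"
proof -
  have reduce: "(x choose b) mod p = ((x mod p ^ m) choose b) mod p" for x
    using binomial_add_mult_prime_power_mod[OF assms(1,2), of "x mod p ^ m" "x div p ^ m"]
    by (simp add: mod_div_mult_eq)
  show ?thesis
    using reduce[of n] reduce[of n'] assms(3) by simp
qed

lemma ibinom_of_nat: "ibinom (int n) b = int (n choose b)"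
proof -
  have "real_of_int (\<Prod>j<b. int n - int j) = (\<Prod>j=0..<b. real n - of_nat j)"
    by (simp add: lessThan_atLeast0)
  also have "\<dots> = real_of_int (fact b * int (n choose b))"
    by (simp add: gbinomial_mult_fact[symmetric] binomial_gbinomial)
  finally have "(\<Prod>j<b. int n - int j) = fact b * int (n choose b)"
    using of_int_eq_iff by blast
  then show ?thesis
    unfolding ibinom_def by simp
qed

lemma ibinom_shifted_mod_prime_cong:
  fixes p a a' :: nat
  assumes "prime p" "b < p ^ m" "a > 0" "a' > 0" "a mod p ^ m = a' mod p ^ m"
  shows "ibinom (int a + int b - 2) b mod int p = ibinom (int a' + int b - 2) b mod int p"
proof (cases "b = 0")
  case True
  then show ?thesis
    by (simp add: ibinom_def)
next
  case False
  then have as_nat: "int a + int b - 2 = int (a + b - 2)" "int a' + int b - 2 = int (a' + b - 2)"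
    using assms(3,4) by auto
  have "(a + b - 2) mod p ^ m = (a' + b - 2) mod p ^ m"
  proof -
    have "int a mod int (p ^ m) = int a' mod int (p ^ m)"
      using assms(5) by (metis of_nat_mod)
    then have "(int a + int b - 2) mod int (p ^ m) = (int a' + int b - 2) mod int (p ^ m)"
      by (intro mod_diff_cong mod_add_cong) auto
    then show ?thesis
      unfolding as_nat by (metis of_nat_mod of_nat_eq_iff)
  qed
  then have "((a + b - 2) choose b) mod p = ((a' + b - 2) choose b) mod p"
    by (rule binomial_mod_prime_cong[OF assms(1,2)])
  then show ?thesis
    unfolding as_nat ibinom_of_nat by (metis of_nat_mod)
qed

lemma S_le_index:
  assumes "c \<in> S k" "i \<in> {1..k}"
  shows "c i \<le> i"
proof -
  have "c i \<le> (\<Sum>l=1..i. c l)"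
    using assms(2) by (intro member_le_sum) auto
  also have "\<dots> \<le> i"
    using assms unfolding S_def by blast
  finally show ?thesis .
qed

lemma less_power_lg_double: "i > 0 \<Longrightarrow> i < 2 ^ lg (2 * i)"
  using floor_log_exp2_gt[of i] by (simp add: lg_def)

lemma sum_prod_mod_cong:
  fixes f g :: "'a \<Rightarrow> 'b \<Rightarrow> 'c::euclidean_semiring_cancel"
  assumes "\<And>x i. x \<in> A \<Longrightarrow> i \<in> I \<Longrightarrow> f x i mod m = g x i mod m"
  shows "(\<Sum>x\<in>A. \<Prod>i\<in>I. f x i) mod m = (\<Sum>x\<in>A. \<Prod>i\<in>I. g x i) mod m"
proof -
  have "(\<Prod>i\<in>I. f x i) mod m = (\<Prod>i\<in>I. g x i) mod m" if "x \<in> A" for x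
  proof -
    have "(\<Prod>i\<in>I. f x i mod m) = (\<Prod>i\<in>I. g x i mod m)"
      using assms that by (intro prod.cong) simp_all
    then show ?thesis
      by (metis mod_prod_eq)
  qed
  then have "(\<Sum>x\<in>A. (\<Prod>i\<in>I. f x i) mod m) = (\<Sum>x\<in>A. (\<Prod>i\<in>I. g x i) mod m)"
    by (intro sum.cong) simp_all
  then show ?thesis
    by (metis mod_sum_eq)
qed

theorem corollary4p3:
  fixes k :: nat and \<theta> :: "nat \<Rightarrow> nat" and r :: int
  assumes "k \<ge> 1"
    and "\<forall>i. i \<notin> {1..k} \<longrightarrow> \<theta> i = 0"
  shows "\<forall>a a' :: nat \<Rightarrow> nat.
           (\<forall>i\<in>{1..k}. a i > 0 \<and> a' i > 0 \<and> a i mod 2 ^ lg (2 * i) = a' i mod 2 ^ lg (2 * i))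
           \<longrightarrow> csum k \<theta> r a mod 2 = csum k \<theta> r a' mod 2"
proof (intro allI impI)
  fix a a' :: "nat \<Rightarrow> nat"
  assume a_cong: "\<forall>i\<in>{1..k}. a i > 0 \<and> a' i > 0 \<and> a i mod 2 ^ lg (2 * i) = a' i mod 2 ^ lg (2 * i)"
  have factor_cong: "ibinom (int (a i) + int (B i) - 2) (B i) mod 2
      = ibinom (int (a' i) + int (B i) - 2) (B i) mod 2"
    if "(\<lambda>i. B i + \<theta> i) \<in> S k" "i \<in> {1..k}" for B i
  proof -
    have "B i \<le> i"
      using S_le_index[OF that] by simp
    also have "i < 2 ^ lg (2 * i)"
      using that(2) by (simp add: less_power_lg_double)
    finally show ?thesis
      using ibinom_shifted_mod_prime_cong[of 2, OF two_is_prime_nat] a_cong that(2) by simp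
  qed
  then show "csum k \<theta> r a mod 2 = csum k \<theta> r a' mod 2"
    unfolding csum_def by (rule sum_prod_mod_cong) (blast intro: factor_cong)
qed

end
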